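(* Let $\varphi$ be an almost identity PC-map of $\mathrm{UT}(n,F)$ and let $k$ be a positive integer with $k\le n-3$. If conditions $X_k$ and $Z_k$ hold for $\varphi$, then condition $X_{k+1}$ holds for $\varphi$.
   Context: $F$ is a field and $n\in\mathbb N\cup\{\infty\}$. $\mathrm{UT}(n,F)$ is the group of upper unitriangular $n\times n$ matrices over $F$ (for $n=\infty$: all $\mathbb N\times\mathbb N$ matrices with $1$ on the diagonal and $0$ below it). Convention: $\infty+m=\infty$ for $m\in\mathbb Z$. $e$ is the identity matrix, $e_{ij}$ the matrix unit, $t_{ij}(\alpha)=e+\alpha e_{ij}$ ($i<j$). $[x,y]=xyx^{-1}y^{-1}$. A PC-map is a bijection $\varphi$ of the group with $\varphi([x,y])=[\varphi(x),\varphi(y)]$ for all $x,y$; it is almost identity if $\varphi(t_{ij}(\alpha))=t_{ij}(\alpha)$ for all $i<j$, $\alpha\in F$. Conditions: $X_k$ ($k\le n-2$): $\varphi(a)_{1i}=a_{1i}$ for all $a\in\mathrm{UT}(n,F)$ and all $i=2,\dots,k$. $Z_k$ ($k\le n-3$): for all $\gamma_1,\dots,\gamma_k\in F$, the matrix $z=\prod_{i=1}^{k}t_{i\,k+3}(\gamma_i)$ satisfies $\varphi(z)=z$. *)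

theory Defs
  imports "HOL-Algebra.Group" "HOL-Library.Extended_Nat"
begin

text \<open>Matrices are functions nat => nat => 'a, indices are 1-based and range over
  {i. 1 <= i and enat i <= n}, where n :: enat (n = infinity allowed).
  Entries outside the index range are 0.\<close>

definition idx :: "enat \<Rightarrow> nat \<Rightarrow> bool" where
  "idx n i \<longleftrightarrow> 1 \<le> i \<and> enat i \<le> n"

definition UT_carrier :: "enat \<Rightarrow> (nat \<Rightarrow> nat \<Rightarrow> 'a::field) set" where
  "UT_carrier n = {a. \<forall>i j.
      (idx n i \<and> idx n j \<longrightarrow> (j < i \<longrightarrow> a i j = 0) \<and> (i = j \<longrightarrow> a i j = 1))
    \<and> (\<not> (idx n i \<and> idx n j) \<longrightarrow> a i j = 0)}"

text \<open>Matrix product of upper triangular matrices: only k with i <= k <= j contribute.\<close>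
definition ut_mult :: "(nat \<Rightarrow> nat \<Rightarrow> 'a::field) \<Rightarrow> (nat \<Rightarrow> nat \<Rightarrow> 'a) \<Rightarrow> (nat \<Rightarrow> nat \<Rightarrow> 'a)" where
  "ut_mult a b = (\<lambda>i j. \<Sum>k\<in>{i..j}. a i k * b k j)"

definition ut_one :: "enat \<Rightarrow> (nat \<Rightarrow> nat \<Rightarrow> 'a::field)" where
  "ut_one n = (\<lambda>i j. if i = j \<and> idx n i then 1 else 0)"

definition UT :: "enat \<Rightarrow> (nat \<Rightarrow> nat \<Rightarrow> 'a::field) monoid" where
  "UT n = \<lparr>carrier = UT_carrier n, mult = ut_mult, one = ut_one n\<rparr>"

definition transv :: "enat \<Rightarrow> nat \<Rightarrow> nat \<Rightarrow> 'a::field \<Rightarrow> (nat \<Rightarrow> nat \<Rightarrow> 'a)" where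
  "transv n i j \<alpha> = (\<lambda>p q. ut_one n p q + (if p = i \<and> q = j then \<alpha> else 0))"

definition ut_comm :: "enat \<Rightarrow> (nat \<Rightarrow> nat \<Rightarrow> 'a::field) \<Rightarrow> (nat \<Rightarrow> nat \<Rightarrow> 'a) \<Rightarrow> (nat \<Rightarrow> nat \<Rightarrow> 'a)" where
  "ut_comm n x y = x \<otimes>\<^bsub>UT n\<^esub> y \<otimes>\<^bsub>UT n\<^esub> inv\<^bsub>UT n\<^esub> x \<otimes>\<^bsub>UT n\<^esub> inv\<^bsub>UT n\<^esub> y"

definition PC_map :: "enat \<Rightarrow> ((nat \<Rightarrow> nat \<Rightarrow> 'a::field) \<Rightarrow> (nat \<Rightarrow> nat \<Rightarrow> 'a)) \<Rightarrow> bool" where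
  "PC_map n \<phi> \<longleftrightarrow> bij_betw \<phi> (UT_carrier n) (UT_carrier n) \<and>
     (\<forall>x\<in>UT_carrier n. \<forall>y\<in>UT_carrier n. \<phi> (ut_comm n x y) = ut_comm n (\<phi> x) (\<phi> y))"

definition almost_identity :: "enat \<Rightarrow> ((nat \<Rightarrow> nat \<Rightarrow> 'a::field) \<Rightarrow> (nat \<Rightarrow> nat \<Rightarrow> 'a)) \<Rightarrow> bool" where
  "almost_identity n \<phi> \<longleftrightarrow>
     (\<forall>i j \<alpha>. 1 \<le> i \<and> i < j \<and> enat j \<le> n \<longrightarrow> \<phi> (transv n i j \<alpha>) = transv n i j \<alpha>)"

definition cond_X :: "enat \<Rightarrow> nat \<Rightarrow> ((nat \<Rightarrow> nat \<Rightarrow> 'a::field) \<Rightarrow> (nat \<Rightarrow> nat \<Rightarrow> 'a)) \<Rightarrow> bool" where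
  "cond_X n k \<phi> \<longleftrightarrow> (\<forall>a\<in>UT_carrier n. \<forall>i\<in>{2..k}. \<phi> a 1 i = a 1 i)"

definition z_mat :: "enat \<Rightarrow> nat \<Rightarrow> (nat \<Rightarrow> 'a::field) \<Rightarrow> (nat \<Rightarrow> nat \<Rightarrow> 'a)" where
  "z_mat n k \<gamma> = foldr (\<lambda>i acc. transv n i (k + 3) (\<gamma> i) \<otimes>\<^bsub>UT n\<^esub> acc) [1..<k+1] (ut_one n)"

definition cond_Z :: "enat \<Rightarrow> nat \<Rightarrow> ((nat \<Rightarrow> nat \<Rightarrow> 'a::field) \<Rightarrow> (nat \<Rightarrow> nat \<Rightarrow> 'a)) \<Rightarrow> bool" where
  "cond_Z n k \<phi> \<longleftrightarrow> (\<forall>\<gamma>. \<phi> (z_mat n k \<gamma>) = z_mat n k \<gamma>)"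

end

theory Submission
  imports Defs
begin

text \<open>For x in UT(n,F), the double commutator [[x, t(k+1,k+2,1)], t(k+2,k+3,1)] is the matrix z of
  condition Z_k with \<gamma>_p = x_{p,k+1}, p = 1..k. A PC-map fixing all transvections sends the double
  commutator of a to that of \<phi>(a), and by Z_k it fixes the double commutator of a. Reading off the
  entry (1,k+3) gives \<phi>(a)_{1,k+1} = a_{1,k+1}; the entries (1,2..k) are covered by X_k.\<close>

lemma idx_mono: "idx n j \<Longrightarrow> 1 \<le> i \<Longrightarrow> i \<le> j \<Longrightarrow> idx n i"
  unfolding idx_def using order.trans[of "enat i" "enat j" n] by simp

lemma not_idx_0 [simp]: "\<not> idx n 0"
  by (simp add: idx_def)

lemma UT_carrier_zero_row: "a \<in> UT_carrier n \<Longrightarrow> \<not> idx n i \<Longrightarrow> a i j = 0"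
  unfolding UT_carrier_def by blast

lemma UT_carrier_zero_col: "a \<in> UT_carrier n \<Longrightarrow> \<not> idx n j \<Longrightarrow> a i j = 0"
  unfolding UT_carrier_def by blast

lemma UT_carrier_lower: "a \<in> UT_carrier n \<Longrightarrow> j < i \<Longrightarrow> a i j = 0"
  unfolding UT_carrier_def by blast

lemma UT_carrier_diag: "a \<in> UT_carrier n \<Longrightarrow> idx n i \<Longrightarrow> a i i = 1"
  unfolding UT_carrier_def by blast

lemma UT_carrierI:
  assumes "\<And>i j. \<not> idx n i \<Longrightarrow> a i j = 0" "\<And>i j. \<not> idx n j \<Longrightarrow> a i j = 0"
    and "\<And>i j. j < i \<Longrightarrow> a i j = 0" "\<And>i. idx n i \<Longrightarrow> a i i = 1"
  shows "a \<in> UT_carrier n"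
  unfolding UT_carrier_def using assms by blast

lemma ut_one_in_UT_carrier: "ut_one n \<in> UT_carrier n"
  by (rule UT_carrierI) (auto simp: ut_one_def)

lemma ut_mult_in_UT_carrier:
  assumes a: "a \<in> UT_carrier n" and b: "b \<in> UT_carrier n"
  shows "ut_mult a b \<in> UT_carrier n"
  using UT_carrier_zero_row[OF a] UT_carrier_zero_col[OF b] UT_carrier_diag[OF a] UT_carrier_diag[OF b]
  by (intro UT_carrierI) (auto simp: ut_mult_def)

lemma ut_mult_assoc: "ut_mult (ut_mult a b) c = ut_mult a (ut_mult b c)"
proof (intro ext)
  fix i j
  have "ut_mult (ut_mult a b) c i j = (\<Sum>k\<in>{i..j}. \<Sum>l\<in>{l. l \<in> {i..j} \<and> l \<le> k}. a i l * b l k * c k j)"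
    unfolding ut_mult_def sum_distrib_right by (intro sum.cong refl) (auto intro: sum.cong)
  also have "\<dots> = (\<Sum>l\<in>{i..j}. \<Sum>k\<in>{k. k \<in> {i..j} \<and> l \<le> k}. a i l * b l k * c k j)"
    by (rule sum.swap_restrict[symmetric]) auto
  also have "\<dots> = ut_mult a (ut_mult b c) i j"
    unfolding ut_mult_def sum_distrib_left by (intro sum.cong refl) (auto simp: mult.assoc intro: sum.cong)
  finally show "ut_mult (ut_mult a b) c i j = ut_mult a (ut_mult b c) i j" .
qed

lemma ut_one_ut_mult:
  assumes a: "a \<in> UT_carrier n"
  shows "ut_mult (ut_one n) a = a"
proof (intro ext)
  fix i j
  have "ut_mult (ut_one n) a i j = (\<Sum>k\<in>{i..j}. if k = i then (if idx n i then a k j else 0) else 0)"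
    unfolding ut_mult_def ut_one_def by (intro sum.cong) auto
  also have "\<dots> = a i j"
    using UT_carrier_zero_row[OF a] UT_carrier_lower[OF a] by (auto simp: sum.delta)
  finally show "ut_mult (ut_one n) a i j = a i j" .
qed

function ut_linv_entry :: "(nat \<Rightarrow> nat \<Rightarrow> 'a::field) \<Rightarrow> nat \<Rightarrow> nat \<Rightarrow> 'a" where
  "ut_linv_entry a i j =
     (if j < i then 0 else if j = i then 1 else - (\<Sum>l\<in>{i..<j}. ut_linv_entry a i l * a l j))"
  by pat_completeness auto
termination by (relation "measure (\<lambda>(a, i, j). j - i)") auto

declare ut_linv_entry.simps [simp del]

definition ut_linv :: "enat \<Rightarrow> (nat \<Rightarrow> nat \<Rightarrow> 'a::field) \<Rightarrow> (nat \<Rightarrow> nat \<Rightarrow> 'a)" where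
  "ut_linv n a = (\<lambda>i j. if idx n i \<and> idx n j then ut_linv_entry a i j else 0)"

lemma ut_linv_in_UT_carrier: "ut_linv n a \<in> UT_carrier n"
  by (rule UT_carrierI) (auto simp: ut_linv_def ut_linv_entry.simps)

lemma ut_linv_ut_mult:
  assumes a: "a \<in> UT_carrier n"
  shows "ut_mult (ut_linv n a) a = ut_one n"
proof (intro ext)
  fix i j
  show "ut_mult (ut_linv n a) a i j = ut_one n i j"
  proof (cases "idx n i \<and> idx n j \<and> i < j")
    case True
    then have idx_between: "idx n l" if "l \<in> {i..j}" for l
      using that idx_mono[of n j l] by (auto simp: idx_def)
    have "ut_mult (ut_linv n a) a i j = (\<Sum>l\<in>{i..<j}. ut_linv_entry a i l * a l j) + ut_linv_entry a i j * a j j"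
      using True idx_between
      by (simp add: ut_mult_def ut_linv_def atLeastLessThanSuc_atLeastAtMost[symmetric])
    also have "\<dots> = 0"
      using True UT_carrier_diag[OF a] by (subst (2) ut_linv_entry.simps) simp
    finally show ?thesis using True by (simp add: ut_one_def)
  next
    case False
    then consider "\<not> idx n i" | "\<not> idx n j" | "j < i" | "i = j" "idx n i" by linarith
    then show ?thesis
      using UT_carrier_zero_col[OF a] UT_carrier_diag[OF a]
      by cases (auto simp: ut_mult_def ut_one_def ut_linv_def ut_linv_entry.simps)
  qed
qed

lemma UT_simps: "carrier (UT n) = UT_carrier n" "mult (UT n) = ut_mult" "one (UT n) = ut_one n"
  by (simp_all add: UT_def)

lemma group_UT: "group (UT n :: (nat \<Rightarrow> nat \<Rightarrow> 'a::field) monoid)"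
proof (rule groupI)
  fix x :: "nat \<Rightarrow> nat \<Rightarrow> 'a" assume "x \<in> carrier (UT n)"
  then show "\<exists>y\<in>carrier (UT n). y \<otimes>\<^bsub>UT n\<^esub> x = \<one>\<^bsub>UT n\<^esub>"
    using ut_linv_ut_mult[of x n] ut_linv_in_UT_carrier[of n x] by (auto simp: UT_simps)
qed (auto simp: UT_simps ut_mult_in_UT_carrier ut_one_in_UT_carrier ut_mult_assoc ut_one_ut_mult)

lemma inv_UT_in_UT_carrier: "a \<in> UT_carrier n \<Longrightarrow> inv\<^bsub>UT n\<^esub> a \<in> UT_carrier n"
  using group.inv_closed[OF group_UT] by (simp add: UT_simps)

lemma ut_mult_inv_UT: "a \<in> UT_carrier n \<Longrightarrow> ut_mult a (inv\<^bsub>UT n\<^esub> a) = ut_one n"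
  using group.r_inv[OF group_UT] by (simp add: UT_simps)

lemma transv_in_UT_carrier:
  assumes "1 \<le> j" "j < m" "idx n m"
  shows "transv n j m \<delta> \<in> UT_carrier n"
proof -
  have "idx n j" using idx_mono[OF assms(3) assms(1)] assms(2) by simp
  then show ?thesis
    using assms by (intro UT_carrierI) (auto simp: transv_def ut_one_def)
qed

lemma ut_mult_transv:
  assumes M: "M \<in> UT_carrier n" and jm: "1 \<le> j" "j < m" "idx n m"
  shows "ut_mult M (transv n j m \<delta>) = (\<lambda>p q. M p q + (if q = m then \<delta> * M p j else 0))"
proof (intro ext)
  fix p q
  have "ut_mult M (transv n j m \<delta>) p q =
     (\<Sum>l\<in>{p..q}. if l = q then (if idx n q then M p q else 0) else 0)
   + (\<Sum>l\<in>{p..q}. if l = j then (if q = m then M p j * \<delta> else 0) else 0)"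
    unfolding ut_mult_def transv_def ut_one_def distrib_left sum.distrib
    by (intro arg_cong2[where f="(+)"] sum.cong) auto
  also have "\<dots> = M p q + (if q = m then \<delta> * M p j else 0)"
    using UT_carrier_zero_col[OF M, of q p] UT_carrier_lower[OF M, of q p] UT_carrier_lower[OF M, of j p] jm
    by (auto simp: sum.delta)
  finally show "ut_mult M (transv n j m \<delta>) p q = M p q + (if q = m then \<delta> * M p j else 0)" .
qed

lemma transv_ut_mult:
  assumes M: "M \<in> UT_carrier n" and jm: "1 \<le> j" "j < m" "idx n m"
  shows "ut_mult (transv n j m \<delta>) M = (\<lambda>p q. M p q + (if p = j then \<delta> * M m q else 0))"
proof (intro ext)
  fix p q
  have "ut_mult (transv n j m \<delta>) M p q =
     (\<Sum>l\<in>{p..q}. if l = p then (if idx n p then M p q else 0) else 0)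
   + (\<Sum>l\<in>{p..q}. if l = m then (if p = j then \<delta> * M m q else 0) else 0)"
    unfolding ut_mult_def transv_def ut_one_def distrib_right sum.distrib
    by (intro arg_cong2[where f="(+)"] sum.cong) auto
  also have "\<dots> = M p q + (if p = j then \<delta> * M m q else 0)"
    using UT_carrier_zero_row[OF M, of p q] UT_carrier_lower[OF M, of q p] UT_carrier_lower[OF M, of q m] jm
    by (auto simp: sum.delta)
  finally show "ut_mult (transv n j m \<delta>) M p q = M p q + (if p = j then \<delta> * M m q else 0)" .
qed

lemma inv_transv:
  fixes \<gamma> :: "'a::field"
  assumes jm: "1 \<le> j" "j < m" "idx n m"
  shows "inv\<^bsub>UT n\<^esub> (transv n j m \<gamma>) = transv n j m (-\<gamma>)"
proof -
  interpret group "UT n :: (nat \<Rightarrow> nat \<Rightarrow> 'a) monoid" by (rule group_UT)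
  have "ut_mult (transv n j m (-\<gamma>)) (transv n j m \<gamma>) = ut_one n"
    unfolding transv_ut_mult[OF transv_in_UT_carrier[OF jm] jm]
    using jm by (intro ext) (auto simp: transv_def ut_one_def)
  then show ?thesis
    by (intro inv_equality) (auto simp: UT_simps transv_in_UT_carrier[OF jm])
qed

lemma conj_transv:
  assumes a: "a \<in> UT_carrier n" and b: "b \<in> UT_carrier n" and ab: "ut_mult a b = ut_one n"
    and jm: "1 \<le> j" "j < m" "idx n m"
  shows "ut_mult (ut_mult a (transv n j m \<gamma>)) b = (\<lambda>p q. ut_one n p q + \<gamma> * a p j * b m q)"
proof (intro ext)
  fix p q
  have "ut_mult (ut_mult a (transv n j m \<gamma>)) b p q
      = ut_mult a b p q + (\<Sum>l\<in>{p..q}. if l = m then \<gamma> * a p j * b m q else 0)"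
    unfolding ut_mult_transv[OF a jm] unfolding ut_mult_def distrib_right sum.distrib
    by (intro arg_cong2[where f="(+)"] sum.cong) auto
  also have "\<dots> = ut_one n p q + \<gamma> * a p j * b m q"
    using UT_carrier_lower[OF a, of j p] UT_carrier_lower[OF b, of q m] jm ab
    by (cases "m < p") (auto simp: sum.delta)
  finally show "ut_mult (ut_mult a (transv n j m \<gamma>)) b p q = ut_one n p q + \<gamma> * a p j * b m q" .
qed

lemma ut_comm_in_UT_carrier:
  assumes "x \<in> UT_carrier n" "y \<in> UT_carrier n"
  shows "ut_comm n x y \<in> UT_carrier n"
proof -
  interpret group "UT n :: (nat \<Rightarrow> nat \<Rightarrow> 'a::field) monoid" by (rule group_UT)
  show ?thesis using assms unfolding ut_comm_def by (simp add: UT_simps[symmetric])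
qed

lemma ut_comm_transv:
  assumes a: "a \<in> UT_carrier n" and jm: "1 \<le> j" "j < m" "idx n m"
  shows "ut_comm n a (transv n j m \<gamma>) =
    (\<lambda>p q. ut_one n p q + \<gamma> * a p j * (inv\<^bsub>UT n\<^esub> a) m q - (if p = j \<and> q = m then \<gamma> else 0))"
proof -
  define b where "b = inv\<^bsub>UT n\<^esub> a"
  have b: "b \<in> UT_carrier n" using inv_UT_in_UT_carrier[OF a] by (simp add: b_def)
  have ab: "ut_mult a b = ut_one n" using ut_mult_inv_UT[OF a] by (simp add: b_def)
  have "idx n j" using idx_mono[OF jm(3) jm(1)] jm(2) by simp
  let ?M = "\<lambda>p q. ut_one n p q + \<gamma> * a p j * b m q"
  have M: "?M \<in> UT_carrier n"
    using conj_transv[OF a b ab jm, of \<gamma>, symmetric]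
      ut_mult_in_UT_carrier[OF ut_mult_in_UT_carrier[OF a transv_in_UT_carrier[OF jm]] b]
    by simp
  have "ut_comm n a (transv n j m \<gamma>) = ut_mult ?M (transv n j m (-\<gamma>))"
    unfolding ut_comm_def inv_transv[OF jm] using conj_transv[OF a b ab jm, of \<gamma>]
    by (simp add: b_def UT_simps)
  also have "\<dots> = (\<lambda>p q. ?M p q - (if p = j \<and> q = m then \<gamma> else 0))"
    unfolding ut_mult_transv[OF M jm]
    using UT_carrier_lower[OF b, of j m] jm \<open>idx n j\<close> by (intro ext) (auto simp: ut_one_def)
  finally show ?thesis by (simp add: b_def)
qed

text \<open>Since [a,t]^-1 = t (a t^-1 a^-1), left multiplication by t only changes row j, and the
  rows of a t^-1 a^-1 below j are those of the identity.\<close>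
lemma inv_ut_comm_transv_row:
  assumes a: "a \<in> UT_carrier n" and jm: "1 \<le> j" "j < m" "idx n m" and r: "j < r"
  shows "(inv\<^bsub>UT n\<^esub> (ut_comm n a (transv n j m \<gamma>))) r q = ut_one n r q"
proof -
  interpret group "UT n :: (nat \<Rightarrow> nat \<Rightarrow> 'a) monoid" by (rule group_UT)
  define b where "b = inv\<^bsub>UT n\<^esub> a"
  have b: "b \<in> UT_carrier n" using inv_UT_in_UT_carrier[OF a] by (simp add: b_def)
  have ab: "ut_mult a b = ut_one n" using ut_mult_inv_UT[OF a] by (simp add: b_def)
  have t: "transv n j m \<gamma> \<in> carrier (UT n)" "transv n j m (-\<gamma>) \<in> carrier (UT n)"
    using transv_in_UT_carrier[OF jm] by (auto simp: UT_simps)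
  have "inv\<^bsub>UT n\<^esub> (ut_comm n a (transv n j m \<gamma>))
     = transv n j m \<gamma> \<otimes>\<^bsub>UT n\<^esub> ((a \<otimes>\<^bsub>UT n\<^esub> transv n j m (-\<gamma>)) \<otimes>\<^bsub>UT n\<^esub> b)"
    unfolding ut_comm_def b_def using t a
    by (simp add: UT_simps[symmetric] inv_mult_group m_assoc inv_transv[OF jm])
  also have "\<dots> = ut_mult (transv n j m \<gamma>) (\<lambda>p q. ut_one n p q + (-\<gamma>) * a p j * b m q)"
    by (simp add: UT_simps conj_transv[OF a b ab jm])
  also have "\<dots> = (\<lambda>p q. (ut_one n p q + (-\<gamma>) * a p j * b m q)
                    + (if p = j then \<gamma> * (ut_one n m q + (-\<gamma>) * a m j * b m q) else 0))"
    using conj_transv[OF a b ab jm, of "-\<gamma>", symmetric]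
      ut_mult_in_UT_carrier[OF ut_mult_in_UT_carrier[OF a transv_in_UT_carrier[OF jm]] b]
    by (intro transv_ut_mult[OF _ jm]) simp
  finally show ?thesis using r UT_carrier_lower[OF a, of j r] by simp
qed

lemma PC_map_in_UT_carrier:
  assumes "PC_map n \<phi>" "x \<in> UT_carrier n"
  shows "\<phi> x \<in> UT_carrier n"
proof -
  have "bij_betw \<phi> (UT_carrier n) (UT_carrier n)" using assms(1) by (simp add: PC_map_def)
  then show ?thesis using assms(2) by (rule bij_betw_apply)
qed

lemma PC_map_ut_comm_transv:
  assumes "PC_map n \<phi>" "almost_identity n \<phi>" "x \<in> UT_carrier n" "1 \<le> j" "j < m" "idx n m"
  shows "\<phi> (ut_comm n x (transv n j m \<alpha>)) = ut_comm n (\<phi> x) (transv n j m \<alpha>)"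
proof -
  have "\<phi> (transv n j m \<alpha>) = transv n j m \<alpha>"
    using assms(2,4-6) unfolding almost_identity_def idx_def by simp
  moreover have "\<phi> (ut_comm n x (transv n j m \<alpha>)) = ut_comm n (\<phi> x) (\<phi> (transv n j m \<alpha>))"
    using assms(1,3) transv_in_UT_carrier[OF assms(4-6)] unfolding PC_map_def by blast
  ultimately show ?thesis by simp
qed

lemma foldr_transv_column:
  assumes "\<forall>i\<in>set is. 1 \<le> i \<and> i < m" "distinct is" "idx n m"
  shows "foldr (\<lambda>i acc. transv n i m (\<gamma> i) \<otimes>\<^bsub>UT n\<^esub> acc) is (ut_one n)
      = (\<lambda>p q. ut_one n p q + (if q = m \<and> p \<in> set is then \<gamma> p else 0))
    \<and> foldr (\<lambda>i acc. transv n i m (\<gamma> i) \<otimes>\<^bsub>UT n\<^esub> acc) is (ut_one n) \<in> UT_carrier n"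
  using assms
proof (induction "is")
  case Nil
  then show ?case by (simp add: ut_one_in_UT_carrier)
next
  case (Cons i "is")
  then have im: "1 \<le> i" "i < m" "idx n m" and "i \<notin> set is" "m \<notin> set is" by auto
  define R where "R = foldr (\<lambda>i acc. transv n i m (\<gamma> i) \<otimes>\<^bsub>UT n\<^esub> acc) is (ut_one n)"
  have "R = (\<lambda>p q. ut_one n p q + (if q = m \<and> p \<in> set is then \<gamma> p else 0)) \<and> R \<in> UT_carrier n"
    unfolding R_def using Cons.prems by (intro Cons.IH) auto
  note R = conjunct1[OF this] conjunct2[OF this]
  have step: "foldr (\<lambda>i acc. transv n i m (\<gamma> i) \<otimes>\<^bsub>UT n\<^esub> acc) (i # is) (ut_one n)
      = ut_mult (transv n i m (\<gamma> i)) R"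
    by (simp add: R_def UT_simps)
  have "ut_mult (transv n i m (\<gamma> i)) R
      = (\<lambda>p q. ut_one n p q + (if q = m \<and> p \<in> set (i # is) then \<gamma> p else 0))"
    unfolding transv_ut_mult[OF R(2) im] unfolding R(1)
    using im \<open>i \<notin> set is\<close> \<open>m \<notin> set is\<close> by (intro ext) (auto simp: ut_one_def)
  then show ?case
    unfolding step using ut_mult_in_UT_carrier[OF transv_in_UT_carrier[OF im] R(2)] by (rule conjI)
qed

lemma z_mat_eq:
  assumes "idx n (k + 3)"
  shows "z_mat n k \<gamma> = (\<lambda>p q. ut_one n p q + (if q = k + 3 \<and> p \<in> {1..k} then \<gamma> p else 0))"
proof -
  have "set [1..<k+1] = {1..k}" by auto
  then show ?thesis
    using conjunct1[OF foldr_transv_column[of "[1..<k+1]" "k+3" n \<gamma>]] assms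
    unfolding z_mat_def by auto
qed

lemma z_mat_entry: "idx n (k + 3) \<Longrightarrow> p \<in> {1..k} \<Longrightarrow> z_mat n k \<gamma> p (k + 3) = \<gamma> p"
  by (simp add: z_mat_eq ut_one_def)

lemma double_comm_transv_eq_z_mat:
  fixes x :: "nat \<Rightarrow> nat \<Rightarrow> 'a::field"
  assumes x: "x \<in> UT_carrier n" and k3: "idx n (k + 3)"
  shows "ut_comm n (ut_comm n x (transv n (k+1) (k+2) 1)) (transv n (k+2) (k+3) 1)
     = z_mat n k (\<lambda>p. x p (k+1))"
proof -
  have k1: "idx n (k+1)" and k2: "idx n (k+2)" using idx_mono[OF k3] by auto
  have jm1: "1 \<le> k+1" "k+1 < k+2" "idx n (k+2)" and jm2: "1 \<le> k+2" "k+2 < k+3" "idx n (k+3)"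
    using k2 k3 by auto
  define c where "c = ut_comm n x (transv n (k+1) (k+2) 1)"
  have c: "c \<in> UT_carrier n"
    unfolding c_def by (rule ut_comm_in_UT_carrier[OF x transv_in_UT_carrier[OF jm1]])
  have c_col: "c p (k+2) = ut_one n p (k+2) + x p (k+1) - (if p = k+1 then 1 else 0)" for p
    unfolding c_def ut_comm_transv[OF x jm1] using UT_carrier_diag[OF inv_UT_in_UT_carrier[OF x] k2] by simp
  have inv_c_row: "(inv\<^bsub>UT n\<^esub> c) (k+3) q = ut_one n (k+3) q" for q
    unfolding c_def by (rule inv_ut_comm_transv_row[OF x jm1]) simp
  show ?thesis
    unfolding c_def[symmetric] ut_comm_transv[OF c jm2] z_mat_eq[OF k3]
  proof (intro ext)
    fix p q
    show "ut_one n p q + 1 * c p (k+2) * (inv\<^bsub>UT n\<^esub> c) (k+3) q - (if p = k+2 \<and> q = k+3 then 1 else 0)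
        = ut_one n p q + (if q = k+3 \<and> p \<in> {1..k} then x p (k+1) else 0)"
      unfolding c_col inv_c_row
      using UT_carrier_diag[OF x k1] UT_carrier_lower[OF x, of "k+1" p] UT_carrier_zero_row[OF x, of 0 "k+1"] k2 k3
      by (cases "p = 0") (auto simp: ut_one_def not_less_eq_eq)
  qed
qed

lemma PC_map_z_mat_column:
  assumes "PC_map n \<phi>" "almost_identity n \<phi>" "x \<in> UT_carrier n" "idx n (k + 3)"
  shows "\<phi> (z_mat n k (\<lambda>p. x p (k+1))) = z_mat n k (\<lambda>p. \<phi> x p (k+1))"
proof -
  have jm: "1 \<le> k+1" "k+1 < k+2" "idx n (k+2)" "1 \<le> k+2" "k+2 < k+3"
    using idx_mono[OF assms(4)] by auto
  have "\<phi> (z_mat n k (\<lambda>p. x p (k+1)))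
      = \<phi> (ut_comm n (ut_comm n x (transv n (k+1) (k+2) 1)) (transv n (k+2) (k+3) 1))"
    by (simp only: double_comm_transv_eq_z_mat[OF assms(3,4)])
  also have "\<dots> = ut_comm n (ut_comm n (\<phi> x) (transv n (k+1) (k+2) 1)) (transv n (k+2) (k+3) 1)"
    using PC_map_ut_comm_transv[OF assms(1-3) jm(1-3)]
      PC_map_ut_comm_transv[OF assms(1,2) ut_comm_in_UT_carrier[OF assms(3) transv_in_UT_carrier[OF jm(1-3)]]
        jm(4,5) assms(4)]
    by simp
  also have "\<dots> = z_mat n k (\<lambda>p. \<phi> x p (k+1))"
    by (rule double_comm_transv_eq_z_mat[OF PC_map_in_UT_carrier[OF assms(1,3)] assms(4)])
  finally show ?thesis .
qed

theorem mainTheorem4: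
  fixes n :: enat and k :: nat
    and \<phi> :: "(nat \<Rightarrow> nat \<Rightarrow> 'a::field) \<Rightarrow> (nat \<Rightarrow> nat \<Rightarrow> 'a)"
  assumes "PC_map n \<phi>" and "almost_identity n \<phi>"
    and "0 < k" and "enat k + 3 \<le> n"
    and "cond_X n k \<phi>" and "cond_Z n k \<phi>"
  shows "cond_X n (k + 1) \<phi>"
  unfolding cond_X_def
proof (intro ballI)
  fix a :: "nat \<Rightarrow> nat \<Rightarrow> 'a" and i assume a: "a \<in> UT_carrier n" and i: "i \<in> {2..k+1}"
  have k3: "idx n (k+3)" using assms(4) by (simp add: idx_def numeral_eq_enat)
  have "z_mat n k (\<lambda>p. \<phi> a p (k+1)) = z_mat n k (\<lambda>p. a p (k+1))"
    using PC_map_z_mat_column[OF assms(1,2) a k3] assms(6) by (simp add: cond_Z_def)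
  then have "z_mat n k (\<lambda>p. \<phi> a p (k+1)) 1 (k+3) = z_mat n k (\<lambda>p. a p (k+1)) 1 (k+3)"
    by simp
  then have "\<phi> a 1 (k+1) = a 1 (k+1)"
    using assms(3) by (simp add: z_mat_entry[OF k3])
  then show "\<phi> a 1 i = a 1 i"
    using assms(5) a i unfolding cond_X_def by (cases "i \<le> k") (auto simp: le_Suc_eq)
qed

end
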